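(* Let $K\ge 2$, let $L_1,\dots,L_K:\mathbb{R}^d\to\mathbb{R}$ be twice differentiable, and let $\mu>0$, $\rho,\delta\ge 0$. Assume every $L_k$ is $\mu$-smooth and $\rho$-Hessian Lipschitz. Let $\widehat{w}_1,\dots,\widehat{w}_{K-1}\in\mathbb{R}^d$ and let $H_1,\dots,H_{K-1}$ be symmetric $d\times d$ matrices with $\|H_k\|_2\le\mu$ and $\|H_k-\nabla^2L_k(\widehat{w}_k)\|_2\le\delta$ for all $k\in[K-1]$. Define \[ \widetilde{L}_{K-1}(w)=\sum_{k=1}^{K-1}\Big(L_k(\widehat{w}_k)+(w-\widehat{w}_k)^\top\nabla L_k(\widehat{w}_k)+\tfrac12(w-\widehat{w}_k)^\top H_k(w-\widehat{w}_k)\Big), \] $\widetilde{F}(w)=\frac1K\big(\widetilde{L}_{K-1}(w)+L_K(w)\big)$ and $F(w)=\frac1K\sum_{k=1}^K L_k(w)$. Let $\mathcal{W}\subseteq\mathbb{R}^d$, and suppose $F^*:=\min_{w\in\mathcal{W}}F(w)$ and $\widetilde{F}^*:=\min_{w\in\mathcal{W}}\widetilde{F}(w)$ exist. Let $w_0=\widehat{w}_{K-1}$ and run $T$ iterations of $w_t=w_{t-1}-\eta\nabla\widetilde{F}(w_{t-1})$ with $\eta=1/\mu$, the iterates lying in $\mathcal{W}$. Put $F_0=F(w_0)$, $\widetilde{F}_0=\widetilde{F}(w_0)$. Then \[ \frac1T\sum_{t=1}^T\|\nabla F(w_{t-1})\|_2\le\frac{\alpha}{\sqrt T}+\beta+\gamma_1\sqrt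 T+\gamma_2 T, \] where $\alpha=\sqrt{2\mu(F_0-F^* )}$, $\beta=\frac{\sqrt3}{K}\sum_{k=1}^{K-2}\big(\delta\|w_0-\widehat{w}_k\|_2+2\rho\|w_0-\widehat{w}_k\|_2^2\big)$, $\gamma_1=\delta\sqrt{\frac3\mu(\widetilde{F}_0-\widetilde{F}^* )}$, and $\gamma_2=\frac{4\rho}{\mu}(\widetilde{F}_0-\widetilde{F}^* )$.
   Context: $\|\cdot\|_2$ denotes the Euclidean norm for vectors and the operator norm for matrices; $[N]=\{1,\dots,N\}$. A differentiable $f$ is $\mu$-smooth if $\|\nabla f(w)-\nabla f(w')\|_2\le\mu\|w-w'\|_2$ for all $w,w'$, and $\rho$-Hessian Lipschitz if $\|\nabla^2 f(w)-\nabla^2 f(w')\|_2\le\rho\|w-w'\|_2$ for all $w,w'$. No convexity is assumed. *)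

theory Defs
  imports "HOL-Analysis.Analysis"
begin

definition mat_opnorm :: "real^'n^'n \<Rightarrow> real" where
  "mat_opnorm A = onorm (\<lambda>x. A *v x)"

definition Ltil :: "nat \<Rightarrow> (nat \<Rightarrow> real^'n \<Rightarrow> real) \<Rightarrow> (nat \<Rightarrow> real^'n \<Rightarrow> real^'n)
    \<Rightarrow> (nat \<Rightarrow> real^'n) \<Rightarrow> (nat \<Rightarrow> real^'n^'n) \<Rightarrow> real^'n \<Rightarrow> real" where
  "Ltil K L gL wh H w = (\<Sum>k=1..K-1. L k (wh k) + (w - wh k) \<bullet> gL k (wh k)
        + (1/2) * ((w - wh k) \<bullet> (H k *v (w - wh k))))"

definition Ftil :: "nat \<Rightarrow> (nat \<Rightarrow> real^'n \<Rightarrow> real) \<Rightarrow> (nat \<Rightarrow> real^'n \<Rightarrow> real^'n)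
    \<Rightarrow> (nat \<Rightarrow> real^'n) \<Rightarrow> (nat \<Rightarrow> real^'n^'n) \<Rightarrow> real^'n \<Rightarrow> real" where
  "Ftil K L gL wh H w = (1 / real K) * (Ltil K L gL wh H w + L K w)"

definition Ftil_grad :: "nat \<Rightarrow> (nat \<Rightarrow> real^'n \<Rightarrow> real^'n)
    \<Rightarrow> (nat \<Rightarrow> real^'n) \<Rightarrow> (nat \<Rightarrow> real^'n^'n) \<Rightarrow> real^'n \<Rightarrow> real^'n" where
  "Ftil_grad K gL wh H w = (1 / real K) *\<^sub>R
     ((\<Sum>k=1..K-1. gL k (wh k) + H k *v (w - wh k)) + gL K w)"

definition Fobj :: "nat \<Rightarrow> (nat \<Rightarrow> real^'n \<Rightarrow> real) \<Rightarrow> real^'n \<Rightarrow> real" where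
  "Fobj K L w = (1 / real K) * (\<Sum>k=1..K. L k w)"

definition Fobj_grad :: "nat \<Rightarrow> (nat \<Rightarrow> real^'n \<Rightarrow> real^'n) \<Rightarrow> real^'n \<Rightarrow> real^'n" where
  "Fobj_grad K gL w = (1 / real K) *\<^sub>R (\<Sum>k=1..K. gL k w)"

end

theory Submission
  imports Defs
begin

(* The iterates are exact gradient descent with step 1/mu on the mu-smooth surrogate Ftil, so the
   descent lemma gives sum_t |grad Ftil (w t)|^2 <= 2 mu G with G = Ftil (w 0) - Ftstar, and by
   Cauchy-Schwarz every iterate stays within D = sqrt (2 T G / mu) of w 0.  Seen from the mu-smooth
   objective F, each step is an inexact gradient step with error e t = grad F (w t) - grad Ftil (w t),
   and the descent lemma for F gives sum_t (|grad F (w t)|^2 - |e t|^2) <= 2 mu (F (w 0) - Fstar).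
   Comparing grad L k with its quadratic model at wh k (Hessian-Lipschitz Taylor bound plus
   |H k - Hess L k (wh k)| <= delta) bounds |e t| by
   (1/K) sum_k (delta |w 0 - wh k| + 2 rho |w 0 - wh k|^2) + delta D + 2 rho D^2.
   A second Cauchy-Schwarz turns the bound on squares into the bound on the mean gradient norm. *)

lemma descent_lemma:
  fixes \<phi> :: "'a::real_inner \<Rightarrow> real" and g :: "'a \<Rightarrow> 'a"
  assumes der: "\<And>x. (\<phi> has_derivative (\<lambda>h. g x \<bullet> h)) (at x)"
    and lip: "\<And>x y. norm (g x - g y) \<le> \<mu> * norm (x - y)"
  shows "\<phi> y \<le> \<phi> x + g x \<bullet> (y - x) + \<mu> / 2 * (norm (y - x))\<^sup>2"
proof -
  define d where "d = y - x"
  define \<psi> where "\<psi> = (\<lambda>t::real. \<phi> (x + t *\<^sub>R d) - t * (g x \<bullet> d) - \<mu> / 2 * t\<^sup>2 * (norm d)\<^sup>2)"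
  have "\<psi> 1 \<le> \<psi> 0"
  proof (rule DERIV_nonpos_imp_nonincreasing[where f=\<psi>])
    fix t :: real assume t: "0 \<le> t" "t \<le> 1"
    have "((\<lambda>t. x + t *\<^sub>R d) has_derivative (\<lambda>s. s *\<^sub>R d)) (at t)"
      by (auto intro!: derivative_eq_intros)
    from has_derivative_compose[OF this der]
    have "((\<lambda>t. \<phi> (x + t *\<^sub>R d)) has_real_derivative (g (x + t *\<^sub>R d) \<bullet> d)) (at t)"
      by (auto intro: has_derivative_imp_has_field_derivative)
    then have "(\<psi> has_real_derivative (g (x + t *\<^sub>R d) - g x) \<bullet> d - \<mu> * t * (norm d)\<^sup>2) (at t)"
      unfolding \<psi>_def by (auto intro!: derivative_eq_intros simp: inner_diff_left)
    moreover have "(g (x + t *\<^sub>R d) - g x) \<bullet> d \<le> \<mu> * t * (norm d)\<^sup>2"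
    proof -
      have "(g (x + t *\<^sub>R d) - g x) \<bullet> d \<le> norm (g (x + t *\<^sub>R d) - g x) * norm d"
        by (rule norm_cauchy_schwarz)
      also have "\<dots> \<le> \<mu> * norm (t *\<^sub>R d) * norm d"
        using lip[of "x + t *\<^sub>R d" x] by (simp add: mult_right_mono)
      finally show ?thesis using t by (simp add: power2_eq_square mult_ac)
    qed
    ultimately show "\<exists>y. (\<psi> has_real_derivative y) (at t) \<and> y \<le> 0" by auto
  qed simp
  then show ?thesis unfolding \<psi>_def d_def by simp
qed

lemma inexact_gradient_step:
  fixes \<phi> :: "'a::real_inner \<Rightarrow> real" and g :: "'a \<Rightarrow> 'a"
  assumes der: "\<And>x. (\<phi> has_derivative (\<lambda>h. g x \<bullet> h)) (at x)"
    and lip: "\<And>x y. norm (g x - g y) \<le> \<mu> * norm (x - y)"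
    and mu: "\<mu> > 0"
  shows "(norm (g x))\<^sup>2 - (norm (g x - d))\<^sup>2 \<le> 2 * \<mu> * (\<phi> x - \<phi> (x - (1 / \<mu>) *\<^sub>R d))"
proof -
  have "2 * \<mu> * \<phi> (x - (1 / \<mu>) *\<^sub>R d) \<le> 2 * \<mu> * \<phi> x - 2 * (g x \<bullet> d) + (norm d)\<^sup>2"
    using descent_lemma[OF der lip, of "x - (1 / \<mu>) *\<^sub>R d" x] mu
    by (simp add: power2_eq_square field_simps)
  moreover have "(norm (g x))\<^sup>2 - (norm (g x - d))\<^sup>2 = 2 * (g x \<bullet> d) - (norm d)\<^sup>2"
    by (simp add: power2_norm_eq_inner inner_diff_left inner_diff_right inner_commute)
  ultimately show ?thesis
    by (simp add: algebra_simps)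
qed

lemma inexact_gradient_descent_telescope:
  fixes \<phi> :: "'a::real_inner \<Rightarrow> real" and g d w :: "_ \<Rightarrow> 'a"
  assumes der: "\<And>x. (\<phi> has_derivative (\<lambda>h. g x \<bullet> h)) (at x)"
    and lip: "\<And>x y. norm (g x - g y) \<le> \<mu> * norm (x - y)"
    and mu: "\<mu> > 0"
    and step: "\<And>t. t < T \<Longrightarrow> w (Suc t) = w t - (1 / \<mu>) *\<^sub>R d t"
  shows "(\<Sum>t<T. (norm (g (w t)))\<^sup>2 - (norm (g (w t) - d t))\<^sup>2) \<le> 2 * \<mu> * (\<phi> (w 0) - \<phi> (w T))"
proof -
  have "(\<Sum>t<T. (norm (g (w t)))\<^sup>2 - (norm (g (w t) - d t))\<^sup>2)
      \<le> (\<Sum>t<T. 2 * \<mu> * (\<phi> (w t) - \<phi> (w (Suc t))))"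
    by (intro sum_mono) (simp add: step inexact_gradient_step[OF der lip mu])
  also have "\<dots> = 2 * \<mu> * (\<phi> (w 0) - \<phi> (w T))"
    by (simp add: sum_distrib_left[symmetric] sum_lessThan_telescope'[of "\<lambda>t. \<phi> (w t)"])
  finally show ?thesis .
qed

lemma sum_le_sqrt_card_mult_sum_squares:
  fixes f :: "'a \<Rightarrow> real"
  shows "(\<Sum>i\<in>I. f i) \<le> sqrt (card I * (\<Sum>i\<in>I. (f i)\<^sup>2))"
  using sum_squared_le_sum_of_squares[of f I] by (intro real_le_rsqrt) (simp add: mult.commute)

lemma iterate_displacement_squared:
  fixes w d :: "nat \<Rightarrow> 'a::real_normed_vector"
  assumes step: "\<And>t. t < n \<Longrightarrow> w (Suc t) = w t - c *\<^sub>R d t"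
  shows "(norm (w n - w 0))\<^sup>2 \<le> c\<^sup>2 * n * (\<Sum>t<n. (norm (d t))\<^sup>2)"
proof -
  have "w n - w 0 = - c *\<^sub>R (\<Sum>t<n. d t)"
    using sum_lessThan_telescope[of w n] step by (simp add: scaleR_sum_right)
  then have "norm (w n - w 0) \<le> \<bar>c\<bar> * (\<Sum>t<n. norm (d t))"
    by (simp add: mult_left_mono norm_sum)
  also have "\<dots> \<le> \<bar>c\<bar> * sqrt (n * (\<Sum>t<n. (norm (d t))\<^sup>2))"
    using sum_le_sqrt_card_mult_sum_squares[of "\<lambda>t. norm (d t)" "{..<n}"]
    by (simp add: mult_left_mono)
  finally show ?thesis
    by (rule power_mono[where n=2, THEN order_trans]) (simp_all add: power_mult_distrib sum_nonneg)
qed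

lemma mean_le_of_sum_squares_le:
  fixes f e :: "nat \<Rightarrow> real"
  assumes sq: "(\<Sum>t<T. (f t)\<^sup>2 - (e t)\<^sup>2) \<le> A"
    and e: "\<And>t. t < T \<Longrightarrow> \<bar>e t\<bar> \<le> E"
    and A: "0 \<le> A" and T: "T > 0"
  shows "(\<Sum>t<T. f t) / T \<le> sqrt A / sqrt T + E"
proof -
  have E: "0 \<le> E" using e[of 0] T by linarith
  have "(\<Sum>t<T. (e t)\<^sup>2) \<le> (\<Sum>t<T. E\<^sup>2)"
    using e power_mono[of "\<bar>e _\<bar>" E 2] by (intro sum_mono) simp
  then have "(\<Sum>t<T. (f t)\<^sup>2) \<le> A + T * E\<^sup>2"
    using sq by (simp add: sum_subtractf)
  then have "T * (\<Sum>t<T. (f t)\<^sup>2) \<le> T * A + (T * E)\<^sup>2"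
    using mult_left_mono[of _ _ "real T"] by (fastforce simp: power2_eq_square algebra_simps)
  then have "(\<Sum>t<T. f t) \<le> sqrt (T * A + (T * E)\<^sup>2)"
    using sum_le_sqrt_card_mult_sum_squares[of f "{..<T}"] by (simp add: order_trans)
  also have "\<dots> \<le> sqrt T * sqrt A + T * E"
    using sqrt_add_le_add_sqrt[of "T * A" "(T * E)\<^sup>2"] A E by (simp add: real_sqrt_mult)
  finally have "(\<Sum>t<T. f t) / T \<le> (sqrt T * sqrt A + T * E) / T"
    using T by (simp add: divide_right_mono)
  also have "\<dots> = sqrt A / sqrt T + E"
    using T by (simp add: field_simps)
  finally show ?thesis .
qed

theorem inexact_gradient_descent_bound:
  fixes \<phi> \<psi> :: "'a::real_inner \<Rightarrow> real" and g\<phi> g\<psi> :: "'a \<Rightarrow> 'a" and w :: "nat \<Rightarrow> 'a"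
  assumes der\<phi>: "\<And>x. (\<phi> has_derivative (\<lambda>h. g\<phi> x \<bullet> h)) (at x)"
    and lip\<phi>: "\<And>x y. norm (g\<phi> x - g\<phi> y) \<le> \<mu> * norm (x - y)"
    and der\<psi>: "\<And>x. (\<psi> has_derivative (\<lambda>h. g\<psi> x \<bullet> h)) (at x)"
    and lip\<psi>: "\<And>x y. norm (g\<psi> x - g\<psi> y) \<le> \<mu> * norm (x - y)"
    and mu: "\<mu> > 0" and a: "a \<ge> 0" and b: "b \<ge> 0"
    and err: "\<And>v. norm (g\<phi> v - g\<psi> v) \<le> B + a * norm (v - w 0) + b * (norm (v - w 0))\<^sup>2"
    and step: "\<And>t. t < T \<Longrightarrow> w (Suc t) = w t - (1 / \<mu>) *\<^sub>R g\<psi> (w t)"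
    and T: "T > 0"
    and \<phi>_min: "\<phi>min \<le> \<phi> (w 0)" "\<phi>min \<le> \<phi> (w T)"
    and \<psi>_min: "\<psi>min \<le> \<psi> (w T)"
  shows "(\<Sum>t<T. norm (g\<phi> (w t))) / T
    \<le> sqrt (2 * \<mu> * (\<phi> (w 0) - \<phi>min)) / sqrt T + B
      + a * sqrt (2 / \<mu> * (\<psi> (w 0) - \<psi>min)) * sqrt T + 2 * b / \<mu> * (\<psi> (w 0) - \<psi>min) * T"
proof -
  define G where "G = \<psi> (w 0) - \<psi>min"
  define D where "D = sqrt (2 / \<mu> * G) * sqrt T"
  have "(\<Sum>t<T. (norm (g\<psi> (w t)))\<^sup>2) \<le> 2 * \<mu> * (\<psi> (w 0) - \<psi> (w T))"
    using inexact_gradient_descent_telescope[where d="\<lambda>t. g\<psi> (w t)", OF der\<psi> lip\<psi> mu step] by simp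
  with \<psi>_min mu have g\<psi>_sum: "(\<Sum>t<T. (norm (g\<psi> (w t)))\<^sup>2) \<le> 2 * \<mu> * G"
    unfolding G_def by (smt (verit) mult_left_mono)
  then have "0 \<le> 2 * \<mu> * G"
    by (meson order_trans sum_nonneg zero_le_power2)
  then have G: "G \<ge> 0"
    using mu by (simp add: zero_le_mult_iff)
  have D2: "D\<^sup>2 = 2 / \<mu> * G * T"
    unfolding D_def using G mu by (simp add: power_mult_distrib)
  have displacement: "norm (w t - w 0) \<le> D" if "t \<le> T" for t
  proof (rule power2_le_imp_le)
    have "(norm (w t - w 0))\<^sup>2 \<le> (1 / \<mu>)\<^sup>2 * t * (\<Sum>s<t. (norm (g\<psi> (w s)))\<^sup>2)"
      using that by (intro iterate_displacement_squared) (simp add: step)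
    also have "\<dots> \<le> (1 / \<mu>)\<^sup>2 * T * (2 * \<mu> * G)"
      by (intro mult_mono order_trans[OF _ g\<psi>_sum] sum_mono2) (use that in \<open>auto intro: sum_nonneg\<close>)
    also have "\<dots> = D\<^sup>2"
      unfolding D2 using mu by (simp add: power2_eq_square field_simps)
    finally show "(norm (w t - w 0))\<^sup>2 \<le> D\<^sup>2" .
  qed (use G mu in \<open>simp add: D_def\<close>)
  have "norm (g\<phi> (w t) - g\<psi> (w t)) \<le> B + a * D + b * D\<^sup>2" if "t < T" for t
  proof -
    have "norm (w t - w 0) \<le> D" using displacement that by simp
    then have "a * norm (w t - w 0) + b * (norm (w t - w 0))\<^sup>2 \<le> a * D + b * D\<^sup>2"
      using a b by (intro add_mono mult_left_mono power_mono) auto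
    then show ?thesis using err[of "w t"] by simp
  qed
  moreover have "(\<Sum>t<T. (norm (g\<phi> (w t)))\<^sup>2 - (norm (g\<phi> (w t) - g\<psi> (w t)))\<^sup>2)
      \<le> 2 * \<mu> * (\<phi> (w 0) - \<phi>min)"
    using inexact_gradient_descent_telescope[where d="\<lambda>t. g\<psi> (w t)", OF der\<phi> lip\<phi> mu step] \<phi>_min(2) mu
    by (smt (verit) mult_left_mono)
  ultimately have "(\<Sum>t<T. norm (g\<phi> (w t))) / T
      \<le> sqrt (2 * \<mu> * (\<phi> (w 0) - \<phi>min)) / sqrt T + (B + a * D + b * D\<^sup>2)"
    using \<phi>_min(1) mu T by (intro mean_le_of_sum_squares_le) auto
  then show ?thesis
    unfolding D2 by (simp add: D_def G_def mult_ac)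
qed

lemma mat_opnorm_mult_le:
  fixes A :: "real^'n^'n"
  shows "norm (A *v x) \<le> mat_opnorm A * norm x"
  unfolding mat_opnorm_def by (rule onorm[OF matrix_vector_mul_bounded_linear])

lemma hessian_lipschitz_gradient_taylor:
  fixes g :: "real^'n \<Rightarrow> real^'n" and Hf :: "real^'n \<Rightarrow> real^'n^'n"
  assumes hess: "\<And>x. (g has_derivative (\<lambda>h. Hf x *v h)) (at x)"
    and hess_lip: "\<And>x y. mat_opnorm (Hf x - Hf y) \<le> \<rho> * norm (x - y)"
    and rho: "\<rho> \<ge> 0"
  shows "norm (g b - g a - Hf a *v (b - a)) \<le> \<rho> * (norm (b - a))\<^sup>2"
proof -
  have "norm (g b - g a - Hf a *v (b - a)) \<le> norm (b - a) * (\<rho> * norm (b - a))"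
  proof (rule differentiable_bound_linearization[where S="closed_segment a b" and f'="\<lambda>x h. Hf x *v h"])
    fix t :: real assume "t \<in> {0..1}"
    then show "a + t *\<^sub>R (b - a) \<in> closed_segment a b"
      unfolding in_segment by (rule_tac x=t in exI) (auto simp: algebra_simps)
  next
    fix x assume "x \<in> closed_segment a b"
    show "(g has_derivative (\<lambda>h. Hf x *v h)) (at x within closed_segment a b)"
      by (rule has_derivative_at_withinI[OF hess])
  next
    fix x assume x: "x \<in> closed_segment a b"
    have "onorm ((\<lambda>h. Hf x *v h) - (\<lambda>h. Hf a *v h)) = mat_opnorm (Hf x - Hf a)"
      unfolding mat_opnorm_def
      by (rule arg_cong[where f=onorm]) (simp add: fun_eq_iff matrix_vector_mult_diff_rdistrib)
    also have "\<dots> \<le> \<rho> * norm (b - a)"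
      using hess_lip[of x a] dist_in_closed_segment[OF x] rho
      by (smt (verit) dist_norm mult_left_mono norm_minus_commute)
    finally show "onorm ((\<lambda>h. Hf x *v h) - (\<lambda>h. Hf a *v h)) \<le> \<rho> * norm (b - a)" .
  qed simp
  then show ?thesis by (simp add: power2_eq_square mult_ac)
qed

lemma gradient_quadratic_model_error:
  fixes g :: "real^'n \<Rightarrow> real^'n" and Hf :: "real^'n \<Rightarrow> real^'n^'n"
  assumes hess: "\<And>x. (g has_derivative (\<lambda>h. Hf x *v h)) (at x)"
    and hess_lip: "\<And>x y. mat_opnorm (Hf x - Hf y) \<le> \<rho> * norm (x - y)"
    and rho: "\<rho> \<ge> 0"
    and approx: "mat_opnorm (A - Hf a) \<le> \<delta>"
  shows "norm (g v - g a - A *v (v - a)) \<le> \<delta> * norm (v - a) + \<rho> * (norm (v - a))\<^sup>2"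
proof -
  have "g v - g a - A *v (v - a) = (g v - g a - Hf a *v (v - a)) - (A - Hf a) *v (v - a)"
    by (simp add: matrix_vector_mult_diff_rdistrib)
  also have "norm \<dots> \<le> \<rho> * (norm (v - a))\<^sup>2 + mat_opnorm (A - Hf a) * norm (v - a)"
    using hessian_lipschitz_gradient_taylor[OF hess hess_lip rho, of v a]
      mat_opnorm_mult_le[of "A - Hf a" "v - a"]
    by (smt (verit) norm_triangle_ineq4)
  also have "\<dots> \<le> \<rho> * (norm (v - a))\<^sup>2 + \<delta> * norm (v - a)"
    using approx by (simp add: mult_right_mono)
  finally show ?thesis by simp
qed

lemma Fobj_has_derivative:
  assumes "\<And>k x. k \<in> {1..K} \<Longrightarrow> (L k has_derivative (\<lambda>h. gL k x \<bullet> h)) (at x)"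
  shows "(Fobj K L has_derivative (\<lambda>h. Fobj_grad K gL x \<bullet> h)) (at x)"
  unfolding Fobj_def[abs_def] Fobj_grad_def
  by (rule has_derivative_eq_rhs, (rule derivative_eq_intros assms | simp)+)
    (simp add: fun_eq_iff inner_sum_left)

lemma Fobj_grad_lipschitz:
  assumes smooth: "\<And>k x y. k \<in> {1..K} \<Longrightarrow> norm (gL k x - gL k y) \<le> \<mu> * norm (x - y)"
    and K: "K \<ge> 1"
  shows "norm (Fobj_grad K gL x - Fobj_grad K gL y) \<le> \<mu> * norm (x - y)"
proof -
  have "norm (Fobj_grad K gL x - Fobj_grad K gL y) = norm (\<Sum>k=1..K. gL k x - gL k y) / K"
    unfolding Fobj_grad_def by (simp add: sum_subtractf scaleR_diff_right[symmetric])
  also have "\<dots> \<le> (\<Sum>k=1..K. \<mu> * norm (x - y)) / K"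
    by (intro divide_right_mono order_trans[OF norm_sum] sum_mono smooth) auto
  also have "\<dots> = \<mu> * norm (x - y)" using K by simp
  finally show ?thesis .
qed

lemma symmetric_matrix_inner_commute:
  fixes A :: "real^'n^'n"
  assumes "transpose A = A"
  shows "x \<bullet> (A *v y) = (A *v x) \<bullet> y"
  by (metis assms dot_lmul_matrix vector_transpose_matrix)

lemma quadratic_model_has_derivative:
  fixes A :: "real^'n^'n"
  assumes "transpose A = A"
  shows "((\<lambda>w. c + (w - a) \<bullet> v + (1/2) * ((w - a) \<bullet> (A *v (w - a))))
     has_derivative (\<lambda>h. (v + A *v (x - a)) \<bullet> h)) (at x)"
proof -
  have A: "((\<lambda>w. A *v (w - a)) has_derivative (\<lambda>h. A *v h)) (at x)"
    by (rule bounded_linear.has_derivative[OF matrix_vector_mul_bounded_linear, of "\<lambda>w. w - a" "\<lambda>h. h", simplified])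
      (auto intro!: derivative_eq_intros)
  have sym: "(x - a) \<bullet> (A *v h) = h \<bullet> (A *v (x - a))" for h
    by (metis symmetric_matrix_inner_commute[OF assms] inner_commute)
  show ?thesis
    by (rule has_derivative_eq_rhs, (rule derivative_eq_intros A refl | simp)+)
      (simp add: fun_eq_iff sym, simp add: inner_add_left inner_add_right inner_commute)
qed

lemma Ftil_has_derivative:
  assumes gK: "(L K has_derivative (\<lambda>h. gL K x \<bullet> h)) (at x)"
    and sym: "\<And>k. k \<in> {1..K-1} \<Longrightarrow> transpose (H k) = H k"
  shows "(Ftil K L gL wh H has_derivative (\<lambda>h. Ftil_grad K gL wh H x \<bullet> h)) (at x)"
proof -
  have Ltil: "(Ltil K L gL wh H has_derivative
      (\<lambda>h. \<Sum>k=1..K-1. (gL k (wh k) + H k *v (x - wh k)) \<bullet> h)) (at x)"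
    unfolding Ltil_def[abs_def]
    by (rule has_derivative_sum) (rule quadratic_model_has_derivative[OF sym], simp)
  show ?thesis
    unfolding Ftil_def[abs_def] Ftil_grad_def
    by (rule has_derivative_eq_rhs, (rule derivative_eq_intros Ltil gK | simp)+)
      (simp add: fun_eq_iff inner_sum_left inner_add_left)
qed

lemma Ftil_grad_lipschitz:
  assumes smooth: "\<And>x y. norm (gL K x - gL K y) \<le> \<mu> * norm (x - y)"
    and H_bnd: "\<And>k. k \<in> {1..K-1} \<Longrightarrow> mat_opnorm (H k) \<le> \<mu>"
    and K: "K \<ge> 1"
  shows "norm (Ftil_grad K gL wh H x - Ftil_grad K gL wh H y) \<le> \<mu> * norm (x - y)"
proof -
  have "Ftil_grad K gL wh H x - Ftil_grad K gL wh H y =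
      (1 / real K) *\<^sub>R ((\<Sum>k=1..K-1. H k *v (x - y)) + (gL K x - gL K y))"
    unfolding Ftil_grad_def
    by (simp add: sum_subtractf[symmetric] scaleR_diff_right[symmetric]
        matrix_vector_mult_diff_distrib algebra_simps)
  then have "norm (Ftil_grad K gL wh H x - Ftil_grad K gL wh H y)
      = norm ((\<Sum>k=1..K-1. H k *v (x - y)) + (gL K x - gL K y)) / K"
    by simp
  also have "\<dots> \<le> ((\<Sum>k=1..K-1. \<mu> * norm (x - y)) + \<mu> * norm (x - y)) / K"
  proof (intro divide_right_mono order_trans[OF norm_triangle_ineq] add_mono
      order_trans[OF norm_sum] sum_mono smooth)
    fix k assume "k \<in> {1..K-1}"
    then show "norm (H k *v (x - y)) \<le> \<mu> * norm (x - y)"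
      using mat_opnorm_mult_le[of "H k" "x - y"] H_bnd
      by (meson mult_right_mono norm_ge_zero order_trans)
  qed simp
  also have "\<dots> = \<mu> * norm (x - y)"
    using K by (simp add: algebra_simps of_nat_diff)
  finally show ?thesis .
qed

lemma Fobj_grad_minus_Ftil_grad:
  assumes "K \<ge> 1"
  shows "Fobj_grad K gL v - Ftil_grad K gL wh H v =
    (1 / real K) *\<^sub>R (\<Sum>k=1..K-1. gL k v - gL k (wh k) - H k *v (v - wh k))"
proof -
  have "(\<Sum>k=1..K. gL k v) = (\<Sum>k=1..K-1. gL k v) + gL K v"
    using assms sum.cl_ivl_Suc[of "\<lambda>k. gL k v" 1 "K - 1"] by simp
  then show ?thesis
    unfolding Fobj_grad_def Ftil_grad_def
    by (simp add: sum_subtractf sum.distrib scaleR_diff_right[symmetric])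
qed

lemma norm_Fobj_grad_minus_Ftil_grad_le:
  assumes K2: "K \<ge> 2"
    and hess: "\<And>k x. k \<in> {1..K} \<Longrightarrow> (gL k has_derivative (\<lambda>h. HL k x *v h)) (at x)"
    and hess_lip: "\<And>k x y. k \<in> {1..K} \<Longrightarrow> mat_opnorm (HL k x - HL k y) \<le> \<rho> * norm (x - y)"
    and H_approx: "\<And>k. k \<in> {1..K-1} \<Longrightarrow> mat_opnorm (H k - HL k (wh k)) \<le> \<delta>"
    and rho: "\<rho> \<ge> 0" and delta: "\<delta> \<ge> 0"
  shows "norm (Fobj_grad K gL v - Ftil_grad K gL wh H v)
    \<le> (1 / real K) * (\<Sum>k=1..K-2. \<delta> * norm (wh (K-1) - wh k) + 2 * \<rho> * (norm (wh (K-1) - wh k))\<^sup>2)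
      + \<delta> * norm (v - wh (K-1)) + 2 * \<rho> * (norm (v - wh (K-1)))\<^sup>2"
proof -
  define z where "z = wh (K - 1)"
  define D where "D = norm (v - z)"
  define c where "c = \<delta> * D + 2 * \<rho> * D\<^sup>2"
  define \<beta> where "\<beta> k = \<delta> * norm (z - wh k) + 2 * \<rho> * (norm (z - wh k))\<^sup>2" for k
  have term_le: "norm (gL k v - gL k (wh k) - H k *v (v - wh k)) \<le> \<beta> k + c"
    if k: "k \<in> {1..K-1}" for k
  proof -
    define r q where "r = norm (v - wh k)" and "q = norm (z - wh k)"
    have "r \<le> q + D"
      using norm_triangle_ineq[of "v - z" "z - wh k"] by (simp add: r_def q_def D_def)
    moreover have "(q + D)\<^sup>2 \<le> 2 * q\<^sup>2 + 2 * D\<^sup>2"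
      using zero_le_power2[of "q - D"] by (simp add: power2_sum power2_diff)
    ultimately have "\<delta> * r + \<rho> * r\<^sup>2 \<le> \<delta> * (q + D) + \<rho> * (2 * q\<^sup>2 + 2 * D\<^sup>2)"
      using delta rho power_mono[of r "q + D" 2]
      by (intro add_mono mult_left_mono) (auto simp: r_def)
    moreover have "norm (gL k v - gL k (wh k) - H k *v (v - wh k)) \<le> \<delta> * r + \<rho> * r\<^sup>2"
      using k unfolding r_def
      by (intro gradient_quadratic_model_error[OF hess hess_lip rho H_approx]) auto
    ultimately show ?thesis
      unfolding \<beta>_def c_def q_def by (simp add: algebra_simps)
  qed
  have c: "c \<ge> 0" unfolding c_def D_def using delta rho by simp
  have "K - 1 = Suc (K - 2)" using K2 by simp
  moreover have "\<beta> (K - 1) = 0" unfolding \<beta>_def z_def by simp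
  ultimately have \<beta>_sum: "(\<Sum>k=1..K-1. \<beta> k) = (\<Sum>k=1..K-2. \<beta> k)"
    using sum.cl_ivl_Suc[of \<beta> 1 "K - 2"] by simp
  have "norm (Fobj_grad K gL v - Ftil_grad K gL wh H v)
      = norm (\<Sum>k=1..K-1. gL k v - gL k (wh k) - H k *v (v - wh k)) / K"
    using K2 by (simp add: Fobj_grad_minus_Ftil_grad)
  also have "\<dots> \<le> (\<Sum>k=1..K-1. \<beta> k + c) / K"
    by (intro divide_right_mono order_trans[OF norm_sum] sum_mono term_le) auto
  also have "\<dots> = (\<Sum>k=1..K-2. \<beta> k) / K + (K - 1) / K * c"
    unfolding sum.distrib \<beta>_sum using K2 by (simp add: of_nat_diff add_divide_distrib)
  also have "\<dots> \<le> (\<Sum>k=1..K-2. \<beta> k) / K + c"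
    using K2 c by (simp add: mult_left_le_one_le del: times_divide_eq_left)
  finally show ?thesis
    unfolding \<beta>_def c_def D_def z_def by simp
qed

theorem theorem2:
  fixes K T :: nat
    and L :: "nat \<Rightarrow> real^'n \<Rightarrow> real"
    and gL :: "nat \<Rightarrow> real^'n \<Rightarrow> real^'n"
    and HL :: "nat \<Rightarrow> real^'n \<Rightarrow> real^'n^'n"
    and wh :: "nat \<Rightarrow> real^'n"
    and H :: "nat \<Rightarrow> real^'n^'n"
    and W :: "(real^'n) set"
    and w :: "nat \<Rightarrow> real^'n"
    and \<mu> \<rho> \<delta> Fstar Ftstar :: real
  assumes K2: "K \<ge> 2"
    and mu_pos: "\<mu> > 0" and rho_nn: "\<rho> \<ge> 0" and delta_nn: "\<delta> \<ge> 0"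
    and grad: "\<And>k x. k \<in> {1..K} \<Longrightarrow> (L k has_derivative (\<lambda>h. gL k x \<bullet> h)) (at x)"
    and hess: "\<And>k x. k \<in> {1..K} \<Longrightarrow> (gL k has_derivative (\<lambda>h. HL k x *v h)) (at x)"
    and smooth: "\<And>k x y. k \<in> {1..K} \<Longrightarrow> norm (gL k x - gL k y) \<le> \<mu> * norm (x - y)"
    and hess_lip: "\<And>k x y. k \<in> {1..K} \<Longrightarrow> mat_opnorm (HL k x - HL k y) \<le> \<rho> * norm (x - y)"
    and H_sym: "\<And>k. k \<in> {1..K-1} \<Longrightarrow> transpose (H k) = H k"
    and H_bnd: "\<And>k. k \<in> {1..K-1} \<Longrightarrow> mat_opnorm (H k) \<le> \<mu>"
    and H_approx: "\<And>k. k \<in> {1..K-1} \<Longrightarrow> mat_opnorm (H k - HL k (wh k)) \<le> \<delta>"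
    and Fstar_min: "Fstar \<in> Fobj K L ` W" "\<And>v. v \<in> W \<Longrightarrow> Fstar \<le> Fobj K L v"
    and Ftstar_min: "Ftstar \<in> Ftil K L gL wh H ` W" "\<And>v. v \<in> W \<Longrightarrow> Ftstar \<le> Ftil K L gL wh H v"
    and T_pos: "T \<ge> 1"
    and w0: "w 0 = wh (K - 1)"
    and step: "\<And>t. t \<in> {1..T} \<Longrightarrow> w t = w (t - 1) - (1 / \<mu>) *\<^sub>R Ftil_grad K gL wh H (w (t - 1))"
    and in_W: "\<And>t. t \<le> T \<Longrightarrow> w t \<in> W"
  shows "(1 / real T) * (\<Sum>t=1..T. norm (Fobj_grad K gL (w (t - 1))))
     \<le> sqrt (2 * \<mu> * (Fobj K L (w 0) - Fstar)) / sqrt (real T)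
       + sqrt 3 / real K * (\<Sum>k=1..K-2. \<delta> * norm (w 0 - wh k) + 2 * \<rho> * (norm (w 0 - wh k))\<^sup>2)
       + \<delta> * sqrt (3 / \<mu> * (Ftil K L gL wh H (w 0) - Ftstar)) * sqrt (real T)
       + 4 * \<rho> / \<mu> * (Ftil K L gL wh H (w 0) - Ftstar) * real T"
proof -
  have K: "K \<ge> 1" "K \<in> {1..K}" using K2 by auto
  define G where "G = Ftil K L gL wh H (w 0) - Ftstar"
  define \<Sigma> where "\<Sigma> = (\<Sum>k=1..K-2. \<delta> * norm (w 0 - wh k) + 2 * \<rho> * (norm (w 0 - wh k))\<^sup>2)"
  have err: "norm (Fobj_grad K gL v - Ftil_grad K gL wh H v)
      \<le> \<Sigma> / K + \<delta> * norm (v - w 0) + 2 * \<rho> * (norm (v - w 0))\<^sup>2" for v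
    using norm_Fobj_grad_minus_Ftil_grad_le[OF K2 hess hess_lip H_approx rho_nn delta_nn]
    by (simp add: \<Sigma>_def w0)
  have descent: "w (Suc t) = w t - (1 / \<mu>) *\<^sub>R Ftil_grad K gL wh H (w t)" if "t < T" for t
    using step[of "Suc t"] that by simp
  have "(\<Sum>t<T. norm (Fobj_grad K gL (w t))) / T
      \<le> sqrt (2 * \<mu> * (Fobj K L (w 0) - Fstar)) / sqrt T + \<Sigma> / K
        + \<delta> * sqrt (2 / \<mu> * G) * sqrt T + 2 * (2 * \<rho>) / \<mu> * G * T"
    unfolding G_def
    by (rule inexact_gradient_descent_bound[OF
          Fobj_has_derivative[OF grad] Fobj_grad_lipschitz[OF smooth K(1)]
          Ftil_has_derivative[where K=K and L=L and gL=gL, OF grad[OF K(2)] H_sym]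
          Ftil_grad_lipschitz[where K=K and gL=gL, OF smooth[OF K(2)] H_bnd K(1)]
          mu_pos delta_nn _ err descent])
      (use T_pos rho_nn Fstar_min(2) Ftstar_min(2) in_W in auto)
  \<comment> \<open>The argument yields the constants 1 and 2/mu; the statement uses the weaker sqrt 3 and 3/mu.\<close>
  moreover have "\<Sigma> / K \<le> sqrt 3 / K * \<Sigma>"
    using rho_nn delta_nn mult_right_mono[of 1 "sqrt 3" \<Sigma>]
    by (simp add: \<Sigma>_def sum_nonneg divide_right_mono)
  moreover have "sqrt (2 / \<mu> * G) \<le> sqrt (3 / \<mu> * G)"
    using Ftstar_min(2)[OF in_W[of 0]] mu_pos by (simp add: G_def divide_right_mono mult_right_mono)
  then have "\<delta> * sqrt (2 / \<mu> * G) * sqrt T \<le> \<delta> * sqrt (3 / \<mu> * G) * sqrt T"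
    using delta_nn by (simp add: mult_left_mono mult_right_mono)
  moreover have "(1 / real T) * (\<Sum>t=1..T. norm (Fobj_grad K gL (w (t - 1))))
      = (\<Sum>t<T. norm (Fobj_grad K gL (w t))) / T"
    unfolding sum_bounds_lt_plus1[symmetric] by simp
  moreover have "2 * (2 * \<rho>) / \<mu> * G * T = 4 * \<rho> / \<mu> * G * T" by simp
  ultimately show ?thesis
    unfolding G_def[symmetric] \<Sigma>_def[symmetric] by linarith
qed

end
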